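(* Let $\alpha\in(0,1)$. (i) If $1<p<\frac n\alpha$ and $\frac1q=\frac1p-\frac\alpha n$, then for every $f$ with $\|f\|_{W^{\alpha,p}}<\infty$, \[ \|f\|_{GaRo_q}\le n^{\frac{n+\alpha p}{2p}}\|f\|_{W^{\alpha,p}}. \] (ii) If $p=\frac n\alpha$, then for every such $f$, \[ \|f\|_{GaRo_\infty}\le n^{\alpha}\|f\|_{W^{\alpha,\frac n\alpha}}. \]
   Context: $Q_0=(0,1)^n$; cubes are subcubes of $Q_0$ with sides parallel to the axes. $P$ is the set of countable families $\{Q_i\}_{i\in I}$ of subcubes of $Q_0$ with pairwise disjoint interiors. For measurable $f$ on $Q_0$, \[ \|f\|_{W^{\alpha,p}}=\Big\{\int_{Q_0}\int_{Q_0}\frac{|f(x)-f(y)|^p}{|x-y|^{n+\alpha p}}\,dx\,dy\Big\}^{1/p}. \] For $1<q\le\infty$ with $1/q+1/q'=1$ ($1/q'=1$ when $q=\infty$), \[ \|f\|_{GaRo_q}=\sup_{\{Q_i\}\in P}\frac{\sum_{i}\frac1{|Q_i|}\int_{Q_i}\int_{Q_i}|f(x)-f(y)|\,dx\,dy}{(\sum_i|Q_i|)^{1/q'}}. \] *)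

theory Defs
  imports "HOL-Analysis.Analysis"
begin

definition Q0 :: "(real ^ 'n) set" where
  "Q0 = box 0 One"

definition is_cube :: "(real ^ 'n) set \<Rightarrow> bool" where
  "is_cube Q \<longleftrightarrow> (\<exists>a r. r > 0 \<and> box a (a + r *\<^sub>R One) \<subseteq> Q \<and> Q \<subseteq> cbox a (a + r *\<^sub>R One))"

definition cube_families :: "(real ^ 'n) set set set" where
  "cube_families = {\<Q>. countable \<Q> \<and> (\<forall>Q\<in>\<Q>. is_cube Q \<and> Q \<subseteq> Q0)
                        \<and> pairwise (\<lambda>A B. interior A \<inter> interior B = {}) \<Q>}"

definition W_int :: "(real ^ 'n \<Rightarrow> real) \<Rightarrow> real \<Rightarrow> real \<Rightarrow> ennreal" where
  "W_int f \<alpha> p = (\<integral>\<^sup>+ x \<in> Q0. (\<integral>\<^sup>+ y \<in> Q0.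
       ennreal (\<bar>f x - f y\<bar> powr p / norm (x - y) powr (real CARD('n) + \<alpha> * p)) \<partial>lebesgue) \<partial>lebesgue)"

definition W_norm :: "(real ^ 'n \<Rightarrow> real) \<Rightarrow> real \<Rightarrow> real \<Rightarrow> ennreal" where
  "W_norm f \<alpha> p = (if W_int f \<alpha> p = \<infinity> then \<infinity> else ennreal (enn2real (W_int f \<alpha> p) powr (1 / p)))"

text \<open>Exponent 1/q' with 1/q + 1/q' = 1, and 1/q' = 1 for q = \<infinity>.\<close>
definition dual_exp :: "ereal \<Rightarrow> real" where
  "dual_exp q = (if q = \<infinity> then 1 else 1 - 1 / real_of_ereal q)"

definition GaRo_norm :: "(real ^ 'n \<Rightarrow> real) \<Rightarrow> ereal \<Rightarrow> ennreal" where
  "GaRo_norm f q = (SUP \<Q> \<in> cube_families.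
      (\<integral>\<^sup>+ Q. ((\<integral>\<^sup>+ x \<in> Q. (\<integral>\<^sup>+ y \<in> Q. ennreal \<bar>f x - f y\<bar> \<partial>lebesgue) \<partial>lebesgue)
                   / emeasure lebesgue Q) \<partial>count_space \<Q>)
      / ennreal ((enn2real (\<integral>\<^sup>+ Q. emeasure lebesgue Q \<partial>count_space \<Q>)) powr dual_exp q))"

end

theory Submission
  imports Defs
begin

text \<open>
  On a cube Q of side r write |f x - f y| = (|f x - f y| / |x - y|^k) * |x - y|^k with
  k = (n + \<alpha> p) / p, bound |x - y| by sqrt n * r, and apply Young's inequality with a free
  weight eps. Integrating over Q \<times> Q, dividing by |Q| and summing over a family of cubes with
  disjoint interiors bounds the numerator of the GaRo quotient by eps W / p + eps^(-p'/p) T^p' / p',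
  where p' is the conjugate of p, W the Gagliardo energy on Q0 and
  T = n^((n + \<alpha> p)/(2p)) (\<Sum> |Q_i|)^(1/q'); the power of \<Sum> |Q_i| comes from
  \<Sum> |Q_i|^s \<le> (\<Sum> |Q_i|)^s for s = p'/q' \<ge> 1. Minimising over eps gives W^(1/p) T.
  Part (ii) is the case p = n / \<alpha>, where 1/q' = 1.
\<close>

lemma conjugate_exponent_eq:
  fixes p p' :: real
  assumes "p > 1" "1/p + 1/p' = 1"
  shows "p' = p / (p - 1)"
proof -
  have "1/p' = (p - 1) / p" using assms by (simp add: field_simps)
  then show ?thesis by (metis divide_divide_eq_right divide_self_if mult_1 nonzero_divide_eq_eq times_divide_eq_left)
qed

lemma Youngs_inequality_eps:
  fixes p p' a b eps :: real
  assumes "p > 1" and conj: "1/p + 1/p' = 1" and "a \<ge> 0" "b \<ge> 0" "eps > 0"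
  shows "a * b \<le> eps * a powr p / p + eps powr (-p'/p) * b powr p' / p'"
proof -
  have "p' > 1"
    by (subst conjugate_exponent_eq[OF assms(1) conj]) (use assms(1) in \<open>simp add: field_simps\<close>)
  have "a * b = (eps powr (1/p) * a) * (eps powr (-1/p) * b)"
    using assms by (simp add: powr_minus_divide[symmetric] powr_add[symmetric] field_simps)
  also have "\<dots> \<le> (eps powr (1/p) * a) powr p / p + (eps powr (-1/p) * b) powr p' / p'"
    using assms \<open>p' > 1\<close> by (intro Youngs_inequality) auto
  also have "\<dots> = eps * a powr p / p + eps powr (-p'/p) * b powr p' / p'"
    using assms by (simp add: powr_mult powr_powr)
  finally show ?thesis .
qed

lemma Young_eps_bound_attained:
  fixes p p' W T :: real
  assumes "p > 1" and conj: "1/p + 1/p' = 1" and "W > 0" "T > 0"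
  defines "eps \<equiv> W powr (1/p - 1) * T"
  shows "eps * W / p + eps powr (-p'/p) * T powr p' / p' = W powr (1/p) * T"
proof -
  have "eps * W = W powr (1/p) * T"
    using \<open>W > 0\<close> by (simp add: eps_def powr_diff)
  moreover have "eps powr (-p'/p) * T powr p' = W powr (1/p) * T"
  proof -
    have exps: "-((1/p - 1) * p' / p) = 1/p" "p' - p'/p = 1"
      using conjugate_exponent_eq[OF assms(1) conj] assms(1) by (auto simp: field_simps)
    have "eps powr (-p'/p) = W powr (1/p) * T powr (-p'/p)"
      using assms by (simp add: eps_def powr_mult powr_powr exps(1))
    then show ?thesis
      using assms by (simp add: powr_add[symmetric] exps(2) mult.assoc)
  qed
  ultimately show ?thesis using conj by (metis distrib_left mult.commute mult_1 times_divide_eq_right)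
qed

text \<open>W or T may vanish, so the minimising weight is taken for W + d, T + d and d \<rightarrow> 0.\<close>

lemma le_powr_mult_if_Young_bounds:
  fixes p p' W T X :: real
  assumes p: "p > 1" and conj: "1/p + 1/p' = 1" and "W \<ge> 0" "T \<ge> 0"
    and bound: "\<And>eps. eps > 0 \<Longrightarrow> X \<le> eps * W / p + eps powr (-p'/p) * T powr p' / p'"
  shows "X \<le> W powr (1/p) * T"
proof -
  have "p' > 0" using conjugate_exponent_eq[OF p conj] p by simp
  have "X \<le> (W + d) powr (1/p) * (T + d)" if "d > 0" for d
  proof -
    define eps where "eps = (W + d) powr (1/p - 1) * (T + d)"
    have "eps > 0" using that assms by (simp add: eps_def)
    then have "X \<le> eps * W / p + eps powr (-p'/p) * T powr p' / p'" by (rule bound)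
    also have "\<dots> \<le> eps * (W + d) / p + eps powr (-p'/p) * (T + d) powr p' / p'"
      using \<open>eps > 0\<close> that assms \<open>p' > 0\<close>
      by (intro add_mono divide_right_mono mult_left_mono powr_mono2) auto
    also have "\<dots> = (W + d) powr (1/p) * (T + d)"
      unfolding eps_def using that assms by (intro Young_eps_bound_attained) auto
    finally show ?thesis .
  qed
  moreover have "((\<lambda>d. (W + d) powr (1/p) * (T + d)) \<longlongrightarrow> W powr (1/p) * T) (at_right 0)"
    using assms by (auto intro!: tendsto_eq_intros eventually_at_rightI[of 0 1])
  ultimately show ?thesis
    by (intro tendsto_lowerbound[OF _ _ trivial_limit_at_right_real])
       (auto intro: eventually_at_rightI[of 0 1])
qed

lemma le_Young_difference_quotient:
  fixes p p' eps m u d D k :: real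
  assumes p: "p > 1" and conj: "1/p + 1/p' = 1" and "eps > 0" "m > 0" "u \<ge> 0" "0 \<le> d" "d \<le> D" "k > 0"
    and "d = 0 \<Longrightarrow> u = 0"
  shows "u / m \<le> eps / p * (u powr p / d powr (k * p)) + eps powr (-p'/p) * (D powr k / m) powr p' / p'"
proof (cases "u = 0")
  case True
  have "p' > 0" using conjugate_exponent_eq[OF p conj] p by simp
  with True show ?thesis using assms by simp
next
  case False
  with assms have "d > 0" by force
  define a where "a = u / d powr k"
  have "a \<ge> 0" using assms by (simp add: a_def)
  have "u / m = a * (d powr k / m)" using \<open>d > 0\<close> by (simp add: a_def)
  also have "\<dots> \<le> a * (D powr k / m)"
    using assms \<open>a \<ge> 0\<close> by (intro mult_left_mono divide_right_mono powr_mono2) auto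
  also have "\<dots> \<le> eps * a powr p / p + eps powr (-p'/p) * (D powr k / m) powr p' / p'"
    using assms \<open>a \<ge> 0\<close> by (intro Youngs_inequality_eps) auto
  also have "a powr p = u powr p / d powr (k * p)"
    using \<open>d > 0\<close> assms by (simp add: a_def powr_divide powr_powr)
  finally show ?thesis by (simp add: mult.commute)
qed

lemma powr_diff_one_mult:
  fixes x s :: real
  assumes "x \<ge> 0" "s \<ge> 1"
  shows "x powr (s - 1) * x = x powr s"
  using assms by (cases "x = 0") (auto simp: powr_diff)

lemma nn_integral_count_space_powr_le:
  fixes f :: "'a \<Rightarrow> real"
  assumes nonneg: "\<And>i. i \<in> I \<Longrightarrow> f i \<ge> 0" and "s \<ge> 1" "S \<ge> 0"
    and sum: "(\<integral>\<^sup>+i. ennreal (f i) \<partial>count_space I) \<le> ennreal S"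
  shows "(\<integral>\<^sup>+i. ennreal (f i powr s) \<partial>count_space I) \<le> ennreal (S powr s)"
proof -
  have le_S: "f i \<le> S" if "i \<in> I" for i
  proof -
    have "ennreal (f i) = (\<integral>\<^sup>+j. ennreal (f i) * indicator {i} j \<partial>count_space I)"
      using that by (simp add: nn_integral_cmult_indicator)
    also have "\<dots> \<le> (\<integral>\<^sup>+j. ennreal (f j) \<partial>count_space I)"
      by (intro nn_integral_mono) (simp split: split_indicator)
    finally have "ennreal (f i) \<le> ennreal S" using sum by (rule order_trans)
    then show ?thesis using \<open>S \<ge> 0\<close> by simp
  qed
  have "f i powr s \<le> S powr (s - 1) * f i" if "i \<in> I" for i
    using le_S[OF that] nonneg[OF that] \<open>s \<ge> 1\<close>
    by (metis powr_diff_one_mult diff_ge_0_iff_ge mult_right_mono powr_mono2)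
  then have "(\<integral>\<^sup>+i. ennreal (f i powr s) \<partial>count_space I)
      \<le> (\<integral>\<^sup>+i. ennreal (S powr (s - 1)) * ennreal (f i) \<partial>count_space I)"
    using nonneg by (intro nn_integral_mono) (simp add: ennreal_mult[symmetric])
  also have "\<dots> \<le> ennreal (S powr (s - 1)) * ennreal S"
    using sum by (simp add: nn_integral_cmult mult_left_mono)
  also have "\<dots> = ennreal (S powr s)"
    using assms by (simp add: ennreal_mult[symmetric] powr_diff_one_mult)
  finally show ?thesis .
qed

interpretation lebesgue: sigma_finite_measure "lebesgue :: 'a::euclidean_space measure"
proof -
  obtain A :: "'a set set" where "countable A" "A \<subseteq> sets lborel" "\<Union>A = space lborel"
    "\<forall>a\<in>A. emeasure lborel a \<noteq> \<infinity>"
    using lborel.sigma_finite_countable by blast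
  then show "sigma_finite_measure (lebesgue :: 'a measure)"
    unfolding sigma_finite_measure_def by (intro exI[of _ A]) (auto simp: subset_eq)
qed

lemma measurable_ident_lebesgue_borel [measurable]:
  "(\<lambda>x. x) \<in> (lebesgue :: 'a::euclidean_space measure) \<rightarrow>\<^sub>M borel"
  by (rule measurable_completion) simp

lemma double_nn_integral_le_affine:
  fixes F G :: "'a::euclidean_space \<Rightarrow> 'a \<Rightarrow> ennreal"
  assumes [measurable]: "case_prod G \<in> borel_measurable (lebesgue \<Otimes>\<^sub>M lebesgue)" "Q \<in> sets lebesgue"
    and bound: "\<And>x y. x \<in> Q \<Longrightarrow> y \<in> Q \<Longrightarrow> F x y \<le> c * G x y + d"
  shows "(\<integral>\<^sup>+x\<in>Q. (\<integral>\<^sup>+y\<in>Q. F x y \<partial>lebesgue) \<partial>lebesgue)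
    \<le> c * (\<integral>\<^sup>+x\<in>Q. (\<integral>\<^sup>+y\<in>Q. G x y \<partial>lebesgue) \<partial>lebesgue)
      + d * emeasure lebesgue Q * emeasure lebesgue Q"
proof -
  have [measurable]: "(\<lambda>x. \<integral>\<^sup>+y\<in>Q. G x y \<partial>lebesgue) \<in> borel_measurable lebesgue"
    by measurable
  have inner: "(\<integral>\<^sup>+y\<in>Q. F x y \<partial>lebesgue)
      \<le> c * (\<integral>\<^sup>+y\<in>Q. G x y \<partial>lebesgue) + d * emeasure lebesgue Q" if "x \<in> Q" for x
  proof -
    have "(\<integral>\<^sup>+y\<in>Q. F x y \<partial>lebesgue) \<le> (\<integral>\<^sup>+y. c * (G x y * indicator Q y) + d * indicator Q y \<partial>lebesgue)"
      using bound[OF that] by (intro nn_integral_mono) (auto split: split_indicator)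
    also have "\<dots> = c * (\<integral>\<^sup>+y\<in>Q. G x y \<partial>lebesgue) + d * emeasure lebesgue Q"
      by (simp add: nn_integral_add nn_integral_cmult)
    finally show ?thesis .
  qed
  have "(\<integral>\<^sup>+x\<in>Q. (\<integral>\<^sup>+y\<in>Q. F x y \<partial>lebesgue) \<partial>lebesgue)
      \<le> (\<integral>\<^sup>+x. c * ((\<integral>\<^sup>+y\<in>Q. G x y \<partial>lebesgue) * indicator Q x)
                 + d * emeasure lebesgue Q * indicator Q x \<partial>lebesgue)"
    using inner by (intro nn_integral_mono) (auto split: split_indicator)
  also have "\<dots> = c * (\<integral>\<^sup>+x\<in>Q. (\<integral>\<^sup>+y\<in>Q. G x y \<partial>lebesgue) \<partial>lebesgue)
      + d * emeasure lebesgue Q * emeasure lebesgue Q"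
    by (simp add: nn_integral_add nn_integral_cmult)
  finally show ?thesis .
qed

lemma double_nn_integral_average_le:
  fixes F G :: "'a::euclidean_space \<Rightarrow> 'a \<Rightarrow> ennreal"
  assumes "case_prod G \<in> borel_measurable (lebesgue \<Otimes>\<^sub>M lebesgue)" "Q \<in> sets lebesgue"
    and Q: "emeasure lebesgue Q = ennreal m" "m > 0" and "d \<ge> 0"
    and bound: "\<And>x y. x \<in> Q \<Longrightarrow> y \<in> Q \<Longrightarrow> F x y \<le> ennreal m * (c * G x y + ennreal d)"
  shows "(\<integral>\<^sup>+x\<in>Q. (\<integral>\<^sup>+y\<in>Q. F x y \<partial>lebesgue) \<partial>lebesgue) / emeasure lebesgue Q
    \<le> c * (\<integral>\<^sup>+x\<in>Q. (\<integral>\<^sup>+y\<in>Q. G x y \<partial>lebesgue) \<partial>lebesgue) + ennreal (m * m * d)"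
proof -
  have "(\<integral>\<^sup>+x\<in>Q. (\<integral>\<^sup>+y\<in>Q. F x y \<partial>lebesgue) \<partial>lebesgue)
      \<le> (ennreal m * c) * (\<integral>\<^sup>+x\<in>Q. (\<integral>\<^sup>+y\<in>Q. G x y \<partial>lebesgue) \<partial>lebesgue)
        + ennreal (m * d) * emeasure lebesgue Q * emeasure lebesgue Q"
    using assms bound
    by (intro double_nn_integral_le_affine) (auto simp: distrib_left mult.assoc ennreal_mult)
  also have "\<dots> = ennreal m * (c * (\<integral>\<^sup>+x\<in>Q. (\<integral>\<^sup>+y\<in>Q. G x y \<partial>lebesgue) \<partial>lebesgue)
      + ennreal (m * m * d))"
    using Q \<open>d \<ge> 0\<close> by (simp add: ennreal_mult distrib_left mult_ac)
  finally show ?thesis using Q by (intro divide_le_posI_ennreal) auto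
qed

lemma gagliardo_kernel_measurable [measurable]:
  fixes g :: "'a::euclidean_space \<Rightarrow> real"
  assumes [measurable]: "g \<in> borel_measurable lebesgue"
  shows "(\<lambda>(x, y). ennreal (\<bar>g x - g y\<bar> powr p / norm (x - y) powr c))
    \<in> borel_measurable (lebesgue \<Otimes>\<^sub>M lebesgue)"
proof -
  have [measurable]: "(\<lambda>z. fst z - snd z) \<in> borel_measurable (lebesgue \<Otimes>\<^sub>M (lebesgue :: 'a measure))"
    by measurable
  show ?thesis by measurable
qed

lemma norm_One: "norm (One :: 'a::euclidean_space) = sqrt DIM('a)"
  by (simp add: norm_eq_sqrt_inner euclidean_inner[of One One])

lemma interior_between_box_cbox:
  fixes S :: "'a::euclidean_space set"
  assumes "box a b \<subseteq> S" "S \<subseteq> cbox a b"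
  shows "interior S = box a b"
  using interior_mono[OF assms(2)] interior_maximal[OF assms(1) open_box] by auto

lemma null_sets_Diff_box_between:
  fixes S :: "'a::euclidean_space set"
  assumes "S \<subseteq> cbox a b"
  shows "S - box a b \<in> null_sets lebesgue"
  using assms
  by (intro null_sets_completion_subset[OF _ null_sets_completionI[OF null_sets_cbox_Diff_box]])
     auto

lemma
  fixes S :: "'a::euclidean_space set"
  assumes "box a b \<subseteq> S" "S \<subseteq> cbox a b"
  shows sets_lebesgue_between_box_cbox: "S \<in> sets lebesgue"
    and emeasure_between_box_cbox: "emeasure lebesgue S = emeasure lborel (box a b)"
proof -
  have S: "S = box a b \<union> (S - box a b)" using assms(1) by auto
  have null: "S - box a b \<in> null_sets lebesgue" using null_sets_Diff_box_between[OF assms(2)] .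
  show "S \<in> sets lebesgue" using null by (subst S) (intro sets.Un, auto)
  have "emeasure lebesgue S = emeasure lebesgue (box a b)"
    using emeasure_Un_null_set[OF _ null, of "box a b"] by (subst S) simp
  then show "emeasure lebesgue S = emeasure lborel (box a b)"
    by simp
qed

lemma is_cubeE:
  fixes Q :: "(real ^ 'n) set"
  assumes "is_cube Q"
  obtains r where "r > 0" "Q \<in> sets lebesgue" "emeasure lebesgue Q = ennreal (r ^ CARD('n))"
    "Q - interior Q \<in> null_sets lebesgue"
    "\<And>x y. x \<in> Q \<Longrightarrow> y \<in> Q \<Longrightarrow> norm (x - y) \<le> sqrt CARD('n) * r"
proof -
  obtain a r where r: "r > 0" and inner: "box a (a + r *\<^sub>R One) \<subseteq> Q"
    and outer: "Q \<subseteq> cbox a (a + r *\<^sub>R One)"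
    using assms unfolding is_cube_def by blast
  have "emeasure lebesgue Q = ennreal (r ^ CARD('n))"
    using r by (simp add: emeasure_between_box_cbox[OF inner outer] emeasure_lborel_box_eq
        inner_add_left inner_diff_left)
  moreover have "norm (x - y) \<le> sqrt CARD('n) * r" if "x \<in> Q" "y \<in> Q" for x y
  proof -
    have "norm (x - y) \<le> diameter (cbox a (a + r *\<^sub>R One))"
      by (rule diameter_bounded_bound[of _ x y, unfolded dist_norm]) (use that outer in auto)
    also have "\<dots> = sqrt CARD('n) * r"
      using r by (simp add: diameter_cbox inner_add_left dist_norm norm_One)
    finally show ?thesis .
  qed
  ultimately show ?thesis
    using r sets_lebesgue_between_box_cbox[OF inner outer] null_sets_Diff_box_between[OF outer]
    by (intro that) (auto simp: interior_between_box_cbox[OF inner outer])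
qed

definition gagliardo_energy :: "(real ^ 'n \<Rightarrow> real) \<Rightarrow> real \<Rightarrow> real \<Rightarrow> (real ^ 'n) set \<Rightarrow> ennreal" where
  "gagliardo_energy f \<alpha> p Q = (\<integral>\<^sup>+x\<in>Q. (\<integral>\<^sup>+y\<in>Q.
     ennreal (\<bar>f x - f y\<bar> powr p / norm (x - y) powr (real CARD('n) + \<alpha> * p)) \<partial>lebesgue) \<partial>lebesgue)"

definition oscillation_integral :: "('a::euclidean_space \<Rightarrow> real) \<Rightarrow> 'a set \<Rightarrow> ennreal" where
  "oscillation_integral f Q = (\<integral>\<^sup>+x\<in>Q. (\<integral>\<^sup>+y\<in>Q. ennreal \<bar>f x - f y\<bar> \<partial>lebesgue) \<partial>lebesgue)"

lemma cube_Young_scaling: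
  fixes r n p p' \<alpha> :: real
  assumes "r > 0" "n > 0" and p: "p > 1" and conj: "1/p + 1/p' = 1"
  defines "m \<equiv> r powr n"
  shows "m * m * ((sqrt n * r) powr ((n + \<alpha> * p) / p) / m) powr p'
    = (n powr ((n + \<alpha> * p) / (2 * p))) powr p' * m powr (p' * (1 - 1/p + \<alpha>/n))"
proof -
  define k where "k = (n + \<alpha> * p) / p"
  define C where "C = n powr ((n + \<alpha> * p) / (2 * p))"
  have "(sqrt n * r) powr k / m = C * r powr (k - n)"
    using assms by (simp add: C_def k_def m_def powr_mult powr_half_sqrt[symmetric] powr_powr powr_diff)
  then have "m * m * ((sqrt n * r) powr k / m) powr p' = C powr p' * r powr (2 * n + (k - n) * p')"
    using assms by (simp add: C_def m_def powr_mult powr_powr powr_add[symmetric] mult_ac)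
  also have "2 * n + (k - n) * p' = n * (p' * (1 - 1/p + \<alpha>/n))"
    using conjugate_exponent_eq[OF p conj] p \<open>n > 0\<close> by (simp add: k_def field_simps)
  finally show ?thesis
    using assms by (simp add: C_def k_def m_def powr_powr)
qed

lemma oscillation_integral_cube_le:
  fixes g :: "real ^ 'n \<Rightarrow> real" and Q :: "(real ^ 'n) set"
  assumes [measurable]: "g \<in> borel_measurable lebesgue" and "is_cube Q"
    and p: "p > 1" and conj: "1/p + 1/p' = 1" and "eps > 0" "\<alpha> > 0"
  defines "n \<equiv> real CARD('n)"
  shows "oscillation_integral g Q / emeasure lebesgue Q
    \<le> ennreal (eps / p) * gagliardo_energy g \<alpha> p Q
      + ennreal (eps powr (-p'/p) * (n powr ((n + \<alpha> * p) / (2 * p))) powr p' / p'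
                 * enn2real (emeasure lebesgue Q) powr (p' * (1 - 1/p + \<alpha>/n)))"
proof -
  obtain r where "r > 0" and [measurable]: "Q \<in> sets lebesgue"
    and "emeasure lebesgue Q = ennreal (r ^ CARD('n))"
    and diam: "\<And>x y. x \<in> Q \<Longrightarrow> y \<in> Q \<Longrightarrow> norm (x - y) \<le> sqrt n * r"
    using is_cubeE[OF \<open>is_cube Q\<close>] unfolding n_def by metis
  define m where "m = r powr n"
  have "m > 0" using \<open>r > 0\<close> by (simp add: m_def)
  have mQ: "emeasure lebesgue Q = ennreal m"
    using \<open>emeasure lebesgue Q = _\<close> \<open>r > 0\<close> by (simp add: m_def n_def powr_realpow)
  have "p' > 0" using conjugate_exponent_eq[OF p conj] p by simp
  define k where "k = (n + \<alpha> * p) / p"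
  have "k > 0" using p \<open>\<alpha> > 0\<close> by (simp add: k_def n_def add_pos_pos)
  have kp: "k * p = n + \<alpha> * p" using p by (simp add: k_def)
  define B where "B = eps powr (-p'/p) * ((sqrt n * r) powr k / m) powr p' / p'"
  have "B \<ge> 0" using \<open>p' > 0\<close> by (simp add: B_def)
  have pointwise: "ennreal \<bar>g x - g y\<bar> \<le> ennreal m * (ennreal (eps / p)
      * ennreal (\<bar>g x - g y\<bar> powr p / norm (x - y) powr (n + \<alpha> * p)) + ennreal B)"
    if "x \<in> Q" "y \<in> Q" for x y
  proof -
    have "\<bar>g x - g y\<bar> / m \<le> eps / p * (\<bar>g x - g y\<bar> powr p / norm (x - y) powr (n + \<alpha> * p)) + B"
      unfolding B_def kp[symmetric] using diam[OF that] assms \<open>m > 0\<close> \<open>k > 0\<close>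
      by (intro le_Young_difference_quotient) auto
    then have "\<bar>g x - g y\<bar> \<le> m * (eps / p * (\<bar>g x - g y\<bar> powr p / norm (x - y) powr (n + \<alpha> * p)) + B)"
      using \<open>m > 0\<close> by (simp add: divide_le_eq mult.commute)
    then show ?thesis
      using \<open>m > 0\<close> \<open>B \<ge> 0\<close> \<open>eps > 0\<close> p
      by (simp add: ennreal_mult'[symmetric] ennreal_plus[symmetric] del: ennreal_plus)
  qed
  have "oscillation_integral g Q / emeasure lebesgue Q
      \<le> ennreal (eps / p) * gagliardo_energy g \<alpha> p Q + ennreal (m * m * B)"
    unfolding oscillation_integral_def gagliardo_energy_def n_def[symmetric]
    using pointwise mQ \<open>m > 0\<close> \<open>B \<ge> 0\<close> by (intro double_nn_integral_average_le) auto
  also have "m * m * B = eps powr (-p'/p) * (n powr ((n + \<alpha> * p) / (2 * p))) powr p' / p'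
                         * m powr (p' * (1 - 1/p + \<alpha>/n))"
    using cube_Young_scaling[OF \<open>r > 0\<close> _ p conj, of n \<alpha>]
    by (simp add: B_def k_def m_def n_def mult_ac)
  finally show ?thesis using \<open>m > 0\<close> by (simp add: mQ)
qed

lemma nn_integral_count_space_indicator_pairwise_disjoint:
  fixes c :: ennreal and f :: "'a \<Rightarrow> 'b set"
  assumes "pairwise (\<lambda>A B. f A \<inter> f B = {}) \<F>"
  shows "(\<integral>\<^sup>+A. c * indicator (f A) x \<partial>count_space \<F>) \<le> c * indicator (\<Union>A\<in>\<F>. f A) x"
proof (cases "\<exists>A\<in>\<F>. x \<in> f A")
  case True
  then obtain A where A: "A \<in> \<F>" "x \<in> f A" by blast
  then have "{B\<in>\<F>. x \<in> f B} = {A}"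
    using assms unfolding pairwise_def by blast
  moreover have "(\<integral>\<^sup>+B. c * indicator (f B) x \<partial>count_space \<F>)
      = c * emeasure (count_space \<F>) {B\<in>\<F>. x \<in> f B}"
    by (subst nn_integral_cmult_indicator[symmetric]) (auto intro!: nn_integral_cong split: split_indicator)
  moreover have "x \<in> (\<Union>A\<in>\<F>. f A)" using A by blast
  ultimately show ?thesis using A by simp
next
  case False
  then have "(\<integral>\<^sup>+A. c * indicator (f A) x \<partial>count_space \<F>) = (\<integral>\<^sup>+A. 0 \<partial>count_space \<F>)"
    by (intro nn_integral_cong) simp
  then show ?thesis by simp
qed

lemma nn_integral_cube_family_le:
  fixes \<phi> :: "real ^ 'n \<Rightarrow> ennreal" and \<F> :: "(real ^ 'n) set set"
  assumes F: "\<F> \<in> cube_families" and [measurable]: "\<phi> \<in> borel_measurable lebesgue"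
  shows "(\<integral>\<^sup>+Q. (\<integral>\<^sup>+x\<in>Q. \<phi> x \<partial>lebesgue) \<partial>count_space \<F>) \<le> (\<integral>\<^sup>+x\<in>Q0. \<phi> x \<partial>lebesgue)"
proof -
  have "countable \<F>" and cube: "\<And>Q. Q \<in> \<F> \<Longrightarrow> is_cube Q" and sub: "\<And>Q. Q \<in> \<F> \<Longrightarrow> Q \<subseteq> Q0"
    and disj: "pairwise (\<lambda>A B. interior A \<inter> interior B = {}) \<F>"
    using F unfolding cube_families_def by auto
  have [measurable]: "interior Q \<in> sets lebesgue" for Q :: "(real ^ 'n) set"
    by (rule sets_completionI_sets) (simp add: borel_open)
  have interior_ae: "(\<integral>\<^sup>+x\<in>Q. \<phi> x \<partial>lebesgue) = (\<integral>\<^sup>+x\<in>interior Q. \<phi> x \<partial>lebesgue)" if "Q \<in> \<F>" for Q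
  proof -
    have "Q \<in> sets lebesgue" "Q - interior Q \<in> null_sets lebesgue"
      using is_cubeE[OF cube[OF that]] by metis+
    moreover have "(Q - interior Q) \<union> (interior Q - Q) = Q - interior Q"
      using interior_subset by blast
    ultimately show ?thesis by (intro nn_integral_null_delta) auto
  qed
  have overlap: "(\<integral>\<^sup>+Q. \<phi> x * indicator (interior Q) x \<partial>count_space \<F>) \<le> \<phi> x * indicator Q0 x" for x
  proof -
    have "(\<Union>Q\<in>\<F>. interior Q) \<subseteq> Q0" using sub interior_subset by blast
    then have "\<phi> x * indicator (\<Union>Q\<in>\<F>. interior Q) x \<le> \<phi> x * indicator Q0 x"
      by (intro mult_left_mono) (auto split: split_indicator)
    with nn_integral_count_space_indicator_pairwise_disjoint[OF disj] show ?thesis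
      by (rule order_trans)
  qed
  have "(\<integral>\<^sup>+Q. (\<integral>\<^sup>+x\<in>Q. \<phi> x \<partial>lebesgue) \<partial>count_space \<F>)
      = (\<integral>\<^sup>+Q. (\<integral>\<^sup>+x. \<phi> x * indicator (interior Q) x \<partial>lebesgue) \<partial>count_space \<F>)"
    by (rule nn_integral_cong) (rule interior_ae, simp)
  also have "\<dots> = (\<integral>\<^sup>+x. (\<integral>\<^sup>+Q. \<phi> x * indicator (interior Q) x \<partial>count_space \<F>) \<partial>lebesgue)"
    using \<open>countable \<F>\<close> by (intro nn_integral_count_space_nn_integral[symmetric]) auto
  also have "\<dots> \<le> (\<integral>\<^sup>+x\<in>Q0. \<phi> x \<partial>lebesgue)"
    by (intro nn_integral_mono overlap)
  finally show ?thesis .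
qed

lemma emeasure_Q0: "emeasure lebesgue (Q0 :: (real ^ 'n) set) = 1"
  by (simp add: Q0_def emeasure_lborel_box_eq)

lemma cube_family_measure_le_1:
  fixes \<F> :: "(real ^ 'n) set set"
  assumes "\<F> \<in> cube_families"
  shows "(\<integral>\<^sup>+Q. emeasure lebesgue Q \<partial>count_space \<F>) \<le> 1"
proof -
  have "Q \<in> sets lebesgue" if "Q \<in> \<F>" for Q
    using that assms is_cubeE[of Q] unfolding cube_families_def by blast
  then have "(\<integral>\<^sup>+Q. emeasure lebesgue Q \<partial>count_space \<F>)
      = (\<integral>\<^sup>+Q. (\<integral>\<^sup>+x\<in>Q. 1 \<partial>lebesgue) \<partial>count_space \<F>)"
    by (intro nn_integral_cong) simp
  also have "\<dots> \<le> 1"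
    using nn_integral_cube_family_le[OF assms, of "\<lambda>_. 1"] by (simp add: emeasure_Q0 Q0_def)
  finally show ?thesis .
qed

lemma gagliardo_energy_cube_family_le:
  fixes g :: "real ^ 'n \<Rightarrow> real" and \<F> :: "(real ^ 'n) set set"
  assumes [measurable]: "g \<in> borel_measurable lebesgue" and F: "\<F> \<in> cube_families"
  shows "(\<integral>\<^sup>+Q. gagliardo_energy g \<alpha> p Q \<partial>count_space \<F>) \<le> W_int g \<alpha> p"
proof -
  define h where "h x = (\<integral>\<^sup>+y\<in>Q0. ennreal (\<bar>g x - g y\<bar> powr p
                    / norm (x - y) powr (real CARD('n) + \<alpha> * p)) \<partial>lebesgue)" for x
  have [measurable]: "(Q0 :: (real ^ 'n) set) \<in> sets lebesgue" by (simp add: Q0_def)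
  have [measurable]: "h \<in> borel_measurable lebesgue" unfolding h_def by measurable
  have "gagliardo_energy g \<alpha> p Q \<le> (\<integral>\<^sup>+x\<in>Q. h x \<partial>lebesgue)" if "Q \<in> \<F>" for Q
  proof -
    have "Q \<subseteq> Q0" using that F by (auto simp: cube_families_def)
    then show ?thesis
      unfolding gagliardo_energy_def h_def
      by (intro nn_integral_mono mult_right_mono) (auto split: split_indicator)
  qed
  then have "(\<integral>\<^sup>+Q. gagliardo_energy g \<alpha> p Q \<partial>count_space \<F>)
      \<le> (\<integral>\<^sup>+Q. (\<integral>\<^sup>+x\<in>Q. h x \<partial>lebesgue) \<partial>count_space \<F>)"
    by (intro nn_integral_mono) simp
  also have "\<dots> \<le> W_int g \<alpha> p"
    using nn_integral_cube_family_le[OF F] by (simp add: W_int_def h_def)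
  finally show ?thesis .
qed

lemma cube_family_sum_le_Young:
  fixes g :: "real ^ 'n \<Rightarrow> real" and \<F> :: "(real ^ 'n) set set"
  assumes [measurable]: "g \<in> borel_measurable lebesgue" and F: "\<F> \<in> cube_families"
    and p: "p > 1" and conj: "1/p + 1/p' = 1" and "eps > 0" "\<alpha> > 0"
  defines "n \<equiv> real CARD('n)"
    and "S \<equiv> enn2real (\<integral>\<^sup>+Q. emeasure lebesgue Q \<partial>count_space \<F>)"
  shows "(\<integral>\<^sup>+Q. oscillation_integral g Q / emeasure lebesgue Q \<partial>count_space \<F>)
    \<le> ennreal (eps / p) * W_int g \<alpha> p
      + ennreal (eps powr (-p'/p) * (n powr ((n + \<alpha> * p) / (2 * p)) * S powr (1 - 1/p + \<alpha>/n)) powr p' / p')"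
proof -
  define C where "C = n powr ((n + \<alpha> * p) / (2 * p))"
  define e where "e = 1 - 1/p + \<alpha>/n"
  define \<beta> where "\<beta> = eps powr (-p'/p) * C powr p' / p'"
  define m where "m Q = enn2real (emeasure lebesgue Q)" for Q :: "(real ^ 'n) set"
  have "p' > 0" using conjugate_exponent_eq[OF p conj] p by simp
  have "\<beta> \<ge> 0" using \<open>p' > 0\<close> by (simp add: \<beta>_def)
  have cube: "is_cube Q" if "Q \<in> \<F>" for Q using that F by (auto simp: cube_families_def)
  have mQ: "emeasure lebesgue Q = ennreal (m Q)" if "Q \<in> \<F>" for Q
    using is_cubeE[OF cube[OF that]] by (metis enn2real_ennreal m_def zero_le_power less_imp_le)
  have "(\<integral>\<^sup>+Q. emeasure lebesgue Q \<partial>count_space \<F>) \<le> 1"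
    using cube_family_measure_le_1[OF F] .
  then have S: "(\<integral>\<^sup>+Q. ennreal (m Q) \<partial>count_space \<F>) = ennreal S"
    unfolding S_def by (subst nn_integral_cong[OF mQ[symmetric]]) (auto simp: ennreal_enn2real_if top_unique)
  have "p' * e = 1 + p' * \<alpha> / n"
    unfolding e_def conjugate_exponent_eq[OF p conj] using p by (simp add: n_def field_simps)
  then have "p' * e \<ge> 1" using \<open>p' > 0\<close> \<open>\<alpha> > 0\<close> by (simp add: n_def)
  have "(\<integral>\<^sup>+Q. oscillation_integral g Q / emeasure lebesgue Q \<partial>count_space \<F>)
      \<le> (\<integral>\<^sup>+Q. ennreal (eps / p) * gagliardo_energy g \<alpha> p Q + ennreal \<beta> * ennreal (m Q powr (p' * e))
            \<partial>count_space \<F>)"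
    using oscillation_integral_cube_le[OF assms(1) cube p conj \<open>eps > 0\<close> \<open>\<alpha> > 0\<close>] \<open>\<beta> \<ge> 0\<close>
    by (intro nn_integral_mono)
       (simp add: \<beta>_def C_def e_def m_def n_def ennreal_mult[symmetric] mult_ac)
  also have "\<dots> = ennreal (eps / p) * (\<integral>\<^sup>+Q. gagliardo_energy g \<alpha> p Q \<partial>count_space \<F>)
      + ennreal \<beta> * (\<integral>\<^sup>+Q. ennreal (m Q powr (p' * e)) \<partial>count_space \<F>)"
    by (simp add: nn_integral_add nn_integral_cmult)
  also have "\<dots> \<le> ennreal (eps / p) * W_int g \<alpha> p + ennreal \<beta> * ennreal (S powr (p' * e))"
    using gagliardo_energy_cube_family_le[OF assms(1) F]
      nn_integral_count_space_powr_le[OF _ \<open>p' * e \<ge> 1\<close> _ S[THEN eq_refl]]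
    by (intro add_mono mult_left_mono) (auto simp: m_def S_def)
  also have "ennreal \<beta> * ennreal (S powr (p' * e)) = ennreal (eps powr (-p'/p) * (C * S powr e) powr p' / p')"
    using \<open>\<beta> \<ge> 0\<close> by (simp add: \<beta>_def C_def ennreal_mult[symmetric] powr_mult powr_powr mult_ac S_def)
  finally show ?thesis unfolding C_def e_def .
qed

lemma ennreal_le_powr_mult_if_Young_bounds:
  fixes N :: ennreal and p p' W T :: real
  assumes p: "p > 1" and conj: "1/p + 1/p' = 1" and "W \<ge> 0" "T \<ge> 0"
    and bound: "\<And>eps. eps > 0
      \<Longrightarrow> N \<le> ennreal (eps / p) * ennreal W + ennreal (eps powr (-p'/p) * T powr p' / p')"
  shows "N \<le> ennreal (W powr (1/p) * T)"
proof -
  have "p' > 0" using conjugate_exponent_eq[OF p conj] p by simp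
  have Young: "N \<le> ennreal (eps / p * W + eps powr (-p'/p) * T powr p' / p')" if "eps > 0" for eps
  proof -
    have "ennreal (eps / p * W) = ennreal (eps / p) * ennreal W"
      using that p \<open>W \<ge> 0\<close> by (intro ennreal_mult) auto
    moreover have "ennreal (eps / p * W + eps powr (-p'/p) * T powr p' / p')
        = ennreal (eps / p * W) + ennreal (eps powr (-p'/p) * T powr p' / p')"
      using that p \<open>W \<ge> 0\<close> \<open>p' > 0\<close> by (intro ennreal_plus) auto
    ultimately show ?thesis using bound[OF that] by simp
  qed
  have "N < \<infinity>"
    using le_less_trans[OF Young[OF zero_less_one] ennreal_less_top] by simp
  then have N: "N = ennreal (enn2real N)" by (simp add: less_top)
  have "enn2real N \<le> W powr (1/p) * T"
  proof (rule le_powr_mult_if_Young_bounds[OF p conj \<open>W \<ge> 0\<close> \<open>T \<ge> 0\<close>])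
    fix eps :: real assume "eps > 0"
    have "0 \<le> eps / p * W + eps powr (-p'/p) * T powr p' / p'"
      using \<open>eps > 0\<close> p \<open>W \<ge> 0\<close> \<open>p' > 0\<close> by simp
    moreover have "ennreal (enn2real N) \<le> ennreal (eps / p * W + eps powr (-p'/p) * T powr p' / p')"
      using Young[OF \<open>eps > 0\<close>] N by simp
    ultimately show "enn2real N \<le> eps * W / p + eps powr (-p'/p) * T powr p' / p'"
      by (subst (asm) ennreal_le_iff) simp_all
  qed
  then show ?thesis by (subst N) (rule ennreal_leI)
qed

lemma cube_family_sum_le:
  fixes g :: "real ^ 'n \<Rightarrow> real" and \<F> :: "(real ^ 'n) set set"
  assumes [measurable]: "g \<in> borel_measurable lebesgue" and F: "\<F> \<in> cube_families"
    and p: "p > 1" and "\<alpha> > 0" and W: "W_int g \<alpha> p \<noteq> \<infinity>"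
  defines "n \<equiv> real CARD('n)"
    and "S \<equiv> enn2real (\<integral>\<^sup>+Q. emeasure lebesgue Q \<partial>count_space \<F>)"
  shows "(\<integral>\<^sup>+Q. oscillation_integral g Q / emeasure lebesgue Q \<partial>count_space \<F>)
    \<le> ennreal (n powr ((n + \<alpha> * p) / (2 * p)) * enn2real (W_int g \<alpha> p) powr (1/p)
                * S powr (1 - 1/p + \<alpha>/n))"
proof -
  define p' where "p' = p / (p - 1)"
  have conj: "1/p + 1/p' = 1" using p by (simp add: p'_def field_simps)
  have "W_int g \<alpha> p = ennreal (enn2real (W_int g \<alpha> p))" using W by (simp add: less_top)
  then have "(\<integral>\<^sup>+Q. oscillation_integral g Q / emeasure lebesgue Q \<partial>count_space \<F>)
      \<le> ennreal (enn2real (W_int g \<alpha> p) powr (1/p)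
                 * (n powr ((n + \<alpha> * p) / (2 * p)) * S powr (1 - 1/p + \<alpha>/n)))"
    using cube_family_sum_le_Young[OF assms(1) F p conj _ \<open>\<alpha> > 0\<close>]
    by (intro ennreal_le_powr_mult_if_Young_bounds[OF p conj]) (simp_all add: n_def S_def)
  then show ?thesis by (simp add: mult_ac)
qed

lemma GaRo_norm_eq:
  "GaRo_norm f q = (SUP \<F> \<in> cube_families.
      (\<integral>\<^sup>+Q. oscillation_integral f Q / emeasure lebesgue Q \<partial>count_space \<F>)
      / ennreal (enn2real (\<integral>\<^sup>+Q. emeasure lebesgue Q \<partial>count_space \<F>) powr dual_exp q))"
  by (simp add: GaRo_norm_def oscillation_integral_def)

lemma GaRo_norm_le_W_norm:
  fixes g :: "real ^ 'n \<Rightarrow> real"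
  assumes [measurable]: "g \<in> borel_measurable lebesgue" and p: "p > 1" and "\<alpha> > 0"
    and "W_norm g \<alpha> p < \<infinity>" and q: "dual_exp q = 1 - 1/p + \<alpha> / real CARD('n)"
  shows "GaRo_norm g q
    \<le> ennreal (real CARD('n) powr ((real CARD('n) + \<alpha> * p) / (2 * p))) * W_norm g \<alpha> p"
proof (unfold GaRo_norm_eq q, rule SUP_least)
  have W: "W_int g \<alpha> p \<noteq> \<infinity>"
    using \<open>W_norm g \<alpha> p < \<infinity>\<close> by (auto simp: W_norm_def split: if_splits)
  fix \<F> :: "(real ^ 'n) set set" assume F: "\<F> \<in> cube_families"
  define S where "S = enn2real (\<integral>\<^sup>+Q. emeasure lebesgue Q \<partial>count_space \<F>) powr (1 - 1/p + \<alpha> / real CARD('n))"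
  define N where "N = (\<integral>\<^sup>+Q. oscillation_integral g Q / emeasure lebesgue Q \<partial>count_space \<F>)"
  define B where "B = ennreal (real CARD('n) powr ((real CARD('n) + \<alpha> * p) / (2 * p))) * W_norm g \<alpha> p"
  have "N \<le> B * ennreal S"
    using cube_family_sum_le[OF assms(1) F p \<open>\<alpha> > 0\<close> W] W
    by (simp add: N_def B_def S_def W_norm_def ennreal_mult'[symmetric] mult_ac)
  show "N / ennreal S \<le> B"
  proof (cases "S = 0")
    case True
    with \<open>N \<le> B * ennreal S\<close> show ?thesis by simp
  next
    case False
    then have "ennreal S > 0" by (simp add: S_def)
    with \<open>N \<le> B * ennreal S\<close> show ?thesis by (simp add: divide_le_posI_ennreal mult.commute)
  qed
qed

lemma W_int_cong:
  assumes "\<And>x. x \<in> Q0 \<Longrightarrow> f x = g x"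
  shows "W_int f \<alpha> p = W_int g \<alpha> p"
  unfolding W_int_def
  by (intro nn_integral_cong) (auto intro!: nn_integral_cong simp: assms split: split_indicator)

lemma oscillation_integral_cong:
  assumes "\<And>x. x \<in> Q \<Longrightarrow> f x = g x"
  shows "oscillation_integral f Q = oscillation_integral g Q"
  unfolding oscillation_integral_def
  by (intro nn_integral_cong) (auto intro!: nn_integral_cong simp: assms split: split_indicator)

lemma GaRo_norm_cong:
  fixes f g :: "real ^ 'n \<Rightarrow> real"
  assumes "\<And>x. x \<in> Q0 \<Longrightarrow> f x = g x"
  shows "GaRo_norm f q = GaRo_norm g q"
  unfolding GaRo_norm_eq
proof (rule SUP_cong[OF refl])
  fix \<F> :: "(real ^ 'n) set set" assume "\<F> \<in> cube_families"
  then have "oscillation_integral f Q = oscillation_integral g Q" if "Q \<in> \<F>" for Q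
    using that assms by (intro oscillation_integral_cong) (auto simp: cube_families_def)
  then have "(\<integral>\<^sup>+Q. oscillation_integral f Q / emeasure lebesgue Q \<partial>count_space \<F>)
      = (\<integral>\<^sup>+Q. oscillation_integral g Q / emeasure lebesgue Q \<partial>count_space \<F>)"
    by (intro nn_integral_cong) simp
  then show "(\<integral>\<^sup>+Q. oscillation_integral f Q / emeasure lebesgue Q \<partial>count_space \<F>)
      / ennreal (enn2real (\<integral>\<^sup>+Q. emeasure lebesgue Q \<partial>count_space \<F>) powr dual_exp q)
    = (\<integral>\<^sup>+Q. oscillation_integral g Q / emeasure lebesgue Q \<partial>count_space \<F>)
      / ennreal (enn2real (\<integral>\<^sup>+Q. emeasure lebesgue Q \<partial>count_space \<F>) powr dual_exp q)"
    by simp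
qed

lemma W_norm_cong:
  assumes "\<And>x. x \<in> Q0 \<Longrightarrow> f x = g x"
  shows "W_norm f \<alpha> p = W_norm g \<alpha> p"
proof -
  have "W_int f \<alpha> p = W_int g \<alpha> p" by (rule W_int_cong) (rule assms)
  then show ?thesis by (simp add: W_norm_def)
qed

lemma borel_measurable_zero_extension_Q0:
  assumes "f \<in> borel_measurable (lebesgue_on Q0)"
  shows "(\<lambda>x. if x \<in> Q0 then f x else 0) \<in> borel_measurable lebesgue"
  using assms by (subst (asm) measurable_restrict_space_iff) (auto simp: Q0_def)

theorem theorem4p1:
  fixes f :: "real ^ 'n \<Rightarrow> real" and \<alpha> p :: real
  assumes "0 < \<alpha>" "\<alpha> < 1"
    and "f \<in> borel_measurable (lebesgue_on Q0)"
  shows "(1 < p \<and> p < real CARD('n) / \<alpha> \<and> W_norm f \<alpha> p < \<infinity> \<longrightarrow>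
            GaRo_norm f (ereal (1 / (1 / p - \<alpha> / real CARD('n))))
              \<le> ennreal (real CARD('n) powr ((real CARD('n) + \<alpha> * p) / (2 * p))) * W_norm f \<alpha> p)
       \<and> (W_norm f \<alpha> (real CARD('n) / \<alpha>) < \<infinity> \<longrightarrow>
            GaRo_norm f \<infinity> \<le> ennreal (real CARD('n) powr \<alpha>) * W_norm f \<alpha> (real CARD('n) / \<alpha>))"
proof -
  let ?n = "real CARD('n)"
  \<comment> \<open>both norms only see values on Q0, where f is measurable\<close>
  define g where "g x = (if x \<in> Q0 then f x else 0)" for x
  have g: "g \<in> borel_measurable lebesgue"
    unfolding g_def by (rule borel_measurable_zero_extension_Q0[OF assms(3)])
  have W_norm_eq: "W_norm f \<alpha> r = W_norm g \<alpha> r" for r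
    by (rule W_norm_cong) (simp add: g_def)
  have GaRo_eq: "GaRo_norm f q = GaRo_norm g q" for q
    by (rule GaRo_norm_cong) (simp add: g_def)
  show ?thesis
    unfolding W_norm_eq GaRo_eq
  proof (intro conjI impI)
    assume h: "1 < p \<and> p < ?n / \<alpha> \<and> W_norm g \<alpha> p < \<infinity>"
    have "dual_exp (ereal (1 / (1 / p - \<alpha> / ?n))) = 1 - 1/p + \<alpha> / ?n"
      by (simp add: dual_exp_def)
    then show "GaRo_norm g (ereal (1 / (1 / p - \<alpha> / ?n)))
        \<le> ennreal (?n powr ((?n + \<alpha> * p) / (2 * p))) * W_norm g \<alpha> p"
      using h by (intro GaRo_norm_le_W_norm[OF g _ assms(1)]) simp_all
  next
    assume "W_norm g \<alpha> (?n / \<alpha>) < \<infinity>"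
    have "1 \<le> ?n" by simp
    with assms(2) have "\<alpha> < ?n" by linarith
    then have "?n / \<alpha> > 1" and exponent: "(?n + \<alpha> * (?n / \<alpha>)) / (2 * (?n / \<alpha>)) = \<alpha>"
      using assms(1) by (auto simp: field_simps)
    have "GaRo_norm g \<infinity>
        \<le> ennreal (?n powr ((?n + \<alpha> * (?n / \<alpha>)) / (2 * (?n / \<alpha>)))) * W_norm g \<alpha> (?n / \<alpha>)"
      by (rule GaRo_norm_le_W_norm[OF g \<open>?n / \<alpha> > 1\<close> assms(1) \<open>W_norm g \<alpha> (?n / \<alpha>) < \<infinity>\<close>])
         (use \<open>\<alpha> > 0\<close> in \<open>simp add: dual_exp_def\<close>)
    then show "GaRo_norm g \<infinity> \<le> ennreal (?n powr \<alpha>) * W_norm g \<alpha> (?n / \<alpha>)"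
      unfolding exponent .
  qed
qed

end
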